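(* Let $R$ be a binary relation on $U$ and $x\in U$. The following are equivalent: (i) $R(x)$ is completely join-prime in $\wp(U)^{\vartriangle}$; (ii) $R(x)\not\subseteq\bigcup\{R(y)\mid y\in U,\ R(x)\not\subseteq R(y)\}$; (iii) there exists $w\in R(x)$ such that for all $y\in U$, $w\in R(y)$ implies $R(x)\subseteq R(y)$. Consequently $\mathcal J_p(\wp(U)^{\vartriangle})=\{R(x)\mid x\in U,\ \mathfrak{core}R(x)\neq\emptyset\}$ and $\mathcal J_p(\wp(U)^{\blacktriangle})=\{\breve R(x)\mid x\in U,\ \mathfrak{core}\breve R(x)\neq\emptyset\}$.
   Context: Let $U$ be a set and $R\subseteq U\times U$ a binary relation. For $x\in U$, $R(x)=\{y\in U\mid (x,y)\in R\}$ and $\breve R(x)=\{y\in U\mid (y,x)\in R\}$. $\mathfrak{core}R(x)=\{w\in R(x)\mid \text{for all }y\in U,\ w\in R(y)\text{ implies }R(x)\subseteq R(y)\}$, and $\mathfrak{core}\breve R(x)$ is defined likewise with $\breve R$ in place of $R$. For $X\subseteq U$: $X^{\blacktriangle}=\{x\in U\mid R(x)\cap X\neq\emptyset\}$ and $X^{\vartriangle}=\{x\in U\mid \breve R(x)\cap X\neq\emptyset\}$, so $\{x\}^{\vartriangle}=R(x)$, $\{x\}^{\blacktriangle}=\breve R(x)$. $\wp(U)^{\blacktriangle}=\{X^{\blacktriangle}\mid X\subseteq U\}$, $\wp(U)^{\vartriangle}=\{X^{\vartriangle}\mid X\subseteq U\}$, complete lattices under $\subseteq$ with joins given by unions. An element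 $p$ of a complete lattice $L$ is completely join-prime if $p\le\bigvee X$ implies $p\le x$ for some $x\in X$, for every $X\subseteq L$; $\mathcal J_p(L)$ denotes the set of such elements. *)

theory Defs
  imports Main
begin

text \<open>The universe U is modelled as the type 'a (U = UNIV); R :: 'a rel.\<close>

definition Rimg :: "'a rel \<Rightarrow> 'a \<Rightarrow> 'a set" where
  "Rimg R x = {y. (x, y) \<in> R}"

definition Rconv :: "'a rel \<Rightarrow> 'a \<Rightarrow> 'a set" where
  "Rconv R x = {y. (y, x) \<in> R}"

definition core :: "'a rel \<Rightarrow> 'a \<Rightarrow> 'a set" where
  "core R x = {w \<in> Rimg R x. \<forall>y. w \<in> Rimg R y \<longrightarrow> Rimg R x \<subseteq> Rimg R y}"

definition bup :: "'a rel \<Rightarrow> 'a set \<Rightarrow> 'a set" where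
  "bup R X = {x. Rimg R x \<inter> X \<noteq> {}}"

definition wup :: "'a rel \<Rightarrow> 'a set \<Rightarrow> 'a set" where
  "wup R X = {x. Rconv R x \<inter> X \<noteq> {}}"

definition bup_lattice :: "'a rel \<Rightarrow> 'a set set" where
  "bup_lattice R = {bup R X | X. True}"

definition wup_lattice :: "'a rel \<Rightarrow> 'a set set" where
  "wup_lattice R = {wup R X | X. True}"

text \<open>Completely join-prime elements of a complete lattice L of sets, ordered by
  inclusion, whose joins are unions (as is the case for the lattices above).\<close>
definition cjp :: "'a set set \<Rightarrow> 'a set \<Rightarrow> bool" where
  "cjp L p \<longleftrightarrow> p \<in> L \<and> (\<forall>S \<subseteq> L. p \<subseteq> \<Union>S \<longrightarrow> (\<exists>s\<in>S. p \<subseteq> s))"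

definition Jp :: "'a set set \<Rightarrow> 'a set set" where
  "Jp L = {p. cjp L p}"

end

theory Submission
  imports Defs
begin

text \<open>Every member of \<open>\<wp>(U)\<^sup>\<vartriangle>\<close> is a union of sets \<open>R(z)\<close>. A completely join-prime
  member is therefore contained in, hence equal to, a single \<open>R(x)\<close>; and \<open>R(x)\<close> is
  join-prime exactly when some \<open>w \<in> R(x)\<close> can only be covered by supersets of \<open>R(x)\<close>,
  i.e. when \<open>core R x\<close> is nonempty. The \<open>\<wp>(U)\<^sup>\<blacktriangle>\<close> case is the same statement for the
  converse relation.\<close>

lemma wup_eq_Union_Rimg: "wup R X = \<Union> (Rimg R ` X)"
  by (auto simp: wup_def Rconv_def Rimg_def)

lemma Rimg_in_wup_lattice: "Rimg R x \<in> wup_lattice R"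
  unfolding wup_lattice_def wup_eq_Union_Rimg by (rule CollectI, rule exI[of _ "{x}"]) simp

lemma cjp_mem_of_Union_generated:
  assumes cjp: "cjp L p"
    and "F \<subseteq> L"
    and generated: "\<And>q. q \<in> L \<Longrightarrow> \<exists>G \<subseteq> F. q = \<Union>G"
  shows "p \<in> F"
proof -
  from cjp have "p \<in> L" and prime: "\<forall>S \<subseteq> L. p \<subseteq> \<Union>S \<longrightarrow> (\<exists>s\<in>S. p \<subseteq> s)"
    by (simp_all add: cjp_def)
  obtain G where "G \<subseteq> F" and p: "p = \<Union>G"
    using generated[OF \<open>p \<in> L\<close>] by blast
  with \<open>F \<subseteq> L\<close> prime have "\<exists>s\<in>G. p \<subseteq> s" by simp
  then obtain s where "s \<in> G" "p \<subseteq> s" ..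
  with p have "p = s" by blast
  with \<open>s \<in> G\<close> \<open>G \<subseteq> F\<close> show ?thesis by blast
qed

lemma cjp_wup_lattice_imp_Rimg:
  assumes "cjp (wup_lattice R) p"
  shows "p \<in> range (Rimg R)"
proof (rule cjp_mem_of_Union_generated[OF assms])
  show "range (Rimg R) \<subseteq> wup_lattice R" by (auto intro: Rimg_in_wup_lattice)
  show "\<exists>G \<subseteq> range (Rimg R). q = \<Union>G" if "q \<in> wup_lattice R" for q
    using that by (auto simp: wup_lattice_def wup_eq_Union_Rimg)
qed

lemma cjp_Rimg_imp_not_subset_Union:
  assumes "cjp (wup_lattice R) (Rimg R x)"
  shows "\<not> Rimg R x \<subseteq> \<Union>{Rimg R y | y. \<not> Rimg R x \<subseteq> Rimg R y}"
proof
  let ?S = "{Rimg R y | y. \<not> Rimg R x \<subseteq> Rimg R y}"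
  assume "Rimg R x \<subseteq> \<Union>?S"
  moreover have "?S \<subseteq> wup_lattice R" by (auto intro: Rimg_in_wup_lattice)
  ultimately obtain s where "s \<in> ?S" "Rimg R x \<subseteq> s"
    using assms unfolding cjp_def by blast
  then show False by blast
qed

lemma not_subset_Union_iff_core_nonempty:
  "\<not> Rimg R x \<subseteq> \<Union>{Rimg R y | y. \<not> Rimg R x \<subseteq> Rimg R y} \<longleftrightarrow> core R x \<noteq> {}"
proof -
  have "w \<in> \<Union>{Rimg R y | y. \<not> Rimg R x \<subseteq> Rimg R y} \<longleftrightarrow>
      (\<exists>y. w \<in> Rimg R y \<and> \<not> Rimg R x \<subseteq> Rimg R y)" for w
    by blast
  then show ?thesis
    unfolding core_def subset_iff[of "Rimg R x"] by auto
qed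

lemma core_nonempty_imp_cjp_Rimg:
  assumes "core R x \<noteq> {}"
  shows "cjp (wup_lattice R) (Rimg R x)"
  unfolding cjp_def
proof (intro conjI Rimg_in_wup_lattice allI impI)
  obtain w where w: "w \<in> Rimg R x" and minimal: "\<And>y. w \<in> Rimg R y \<Longrightarrow> Rimg R x \<subseteq> Rimg R y"
    using assms unfolding core_def by blast
  fix S assume S: "S \<subseteq> wup_lattice R" and "Rimg R x \<subseteq> \<Union>S"
  with w obtain s where s: "s \<in> S" "w \<in> s" by blast
  with S obtain X where X: "s = \<Union> (Rimg R ` X)"
    unfolding wup_lattice_def wup_eq_Union_Rimg by blast
  with s obtain z where "z \<in> X" "w \<in> Rimg R z" by blast
  with X minimal have "Rimg R x \<subseteq> s" by blast
  with s show "\<exists>s\<in>S. Rimg R x \<subseteq> s" by blast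
qed

lemma cjp_Rimg_iff_core_nonempty: "cjp (wup_lattice R) (Rimg R x) \<longleftrightarrow> core R x \<noteq> {}"
  using cjp_Rimg_imp_not_subset_Union[of R x] core_nonempty_imp_cjp_Rimg[of R x]
  unfolding not_subset_Union_iff_core_nonempty by blast

lemma Jp_wup_lattice: "Jp (wup_lattice R) = {Rimg R x | x. core R x \<noteq> {}}"
proof (rule set_eqI, rule iffI)
  fix p assume "p \<in> Jp (wup_lattice R)"
  then have cjp: "cjp (wup_lattice R) p" by (simp add: Jp_def)
  then obtain x where "p = Rimg R x" using cjp_wup_lattice_imp_Rimg by blast
  with cjp show "p \<in> {Rimg R x | x. core R x \<noteq> {}}"
    by (auto simp: cjp_Rimg_iff_core_nonempty)
next
  fix p assume "p \<in> {Rimg R x | x. core R x \<noteq> {}}"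
  then show "p \<in> Jp (wup_lattice R)" by (auto simp: Jp_def cjp_Rimg_iff_core_nonempty)
qed

lemma bup_lattice_eq_wup_lattice_converse: "bup_lattice R = wup_lattice (converse R)"
proof -
  have "bup R X = wup (converse R) X" for X
    by (auto simp: bup_def wup_def Rimg_def Rconv_def)
  then show ?thesis by (simp add: bup_lattice_def wup_lattice_def)
qed

lemma Rimg_converse: "Rimg (converse R) = Rconv R"
  by (auto simp: Rimg_def Rconv_def)

theorem mainTheorem10:
  fixes R :: "'a rel"
  shows "(\<forall>x.
            (cjp (wup_lattice R) (Rimg R x) \<longleftrightarrow>
               \<not> Rimg R x \<subseteq> \<Union>{Rimg R y | y. \<not> Rimg R x \<subseteq> Rimg R y})
          \<and> (\<not> Rimg R x \<subseteq> \<Union>{Rimg R y | y. \<not> Rimg R x \<subseteq> Rimg R y} \<longleftrightarrow>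
               (\<exists>w \<in> Rimg R x. \<forall>y. w \<in> Rimg R y \<longrightarrow> Rimg R x \<subseteq> Rimg R y)))
        \<and> Jp (wup_lattice R) = {Rimg R x | x. core R x \<noteq> {}}
        \<and> Jp (bup_lattice R) = {Rconv R x | x. core (converse R) x \<noteq> {}}"
proof (intro conjI allI)
  fix x
  show "cjp (wup_lattice R) (Rimg R x) \<longleftrightarrow>
      \<not> Rimg R x \<subseteq> \<Union>{Rimg R y | y. \<not> Rimg R x \<subseteq> Rimg R y}"
    by (simp only: cjp_Rimg_iff_core_nonempty not_subset_Union_iff_core_nonempty)
  show "\<not> Rimg R x \<subseteq> \<Union>{Rimg R y | y. \<not> Rimg R x \<subseteq> Rimg R y} \<longleftrightarrow>
      (\<exists>w \<in> Rimg R x. \<forall>y. w \<in> Rimg R y \<longrightarrow> Rimg R x \<subseteq> Rimg R y)"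
    unfolding not_subset_Union_iff_core_nonempty by (auto simp: core_def)
next
  show "Jp (wup_lattice R) = {Rimg R x | x. core R x \<noteq> {}}"
    by (rule Jp_wup_lattice)
  show "Jp (bup_lattice R) = {Rconv R x | x. core (converse R) x \<noteq> {}}"
    using Jp_wup_lattice[of "converse R"]
    by (simp add: bup_lattice_eq_wup_lattice_converse Rimg_converse)
qed

end
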